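(* Let $(X,Y,Z)$ be jointly distributed on finite alphabets $\mathcal{X},\mathcal{Y},\mathcal{Z}$ with joint $p(x,y,z)$, and let $\mathcal{Z}_+ = \{z\in\mathcal{Z}: p(z)>0\}$. Let $L>0$, $\tau>0$, $\delta\in(0,1)$. Assume that for each $z\in\mathcal{Z}_+$ we are given preparation oracles for $p(X,Y\mid z)$ and for $p(X\mid z)p(Y\mid z)$, a per-stratum log-ratio oracle $\mathcal{O}_{\log}^{(z)}$ (for the pair $p_z := p(X,Y\mid z)$, $q_z := p(X\mid z)p(Y\mid z)$), and classical access to $p(z)$. Then Algorithm QCMIE (defined in the context) outputs $\widehat{\mathrm{I}}$ satisfying \[ |\widehat{\mathrm{I}} - \mathrm{I}(X;Y\mid Z)| \le \tau + \max_{z\in\mathcal{Z}_+}|\eta_L^{(z)}| \] with probability at least $1-\delta$, using $\mathcal{O}\bigl(|\mathcal{Z}|\cdot(L/\tau)\cdot\log(|\mathcal{Z}|/\delta)\bigr)$ oracle queries, where $\eta_L^{(z)} := D_{\mathrm{KL}}(p_z\|q_z) - D_{\mathrm{KL},L}(p_z\|q_z)$.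
   Context: Logs are base 2. $\mathrm{I}(X;Y\mid Z) = \sum_{z} p(z)\,D_{\mathrm{KL}}(p(X,Y\mid z)\,\|\,p(X\mid z)p(Y\mid z))$. For distributions $p,q$ on a finite set: $\mathrm{clip}_L(u)=\max(-L,\min(L,u))$, $\ell_L(w)=\mathrm{clip}_L(\log_2(p(w)/q(w)))$ (with $\log_2(p/0)=+\infty$, $\log_2(0/q)=-\infty$), $g_L = (\ell_L+L)/(2L)$, $D_{\mathrm{KL},L}(p\|q) = \sum_w p(w)\ell_L(w)$. Oracles: a preparation oracle for $p$ is a unitary $\mathcal{O}_p$ with $\mathcal{O}_p|0\rangle = \sum_w\sqrt{p(w)}|w\rangle$; a log-ratio oracle is a reversible unitary with $|w\rangle|0\rangle_b\mapsto|w\rangle|\ell_L(w)\rangle_b$ ($b=\mathcal{O}(\log(L/\tau))$ fixed-point bits). QKLA$(p,q,\tau,\delta',L)$: with $M = 2^{\lceil\log_2\lceil 4\pi L/\tau\rceil\rceil}$, $k=\lceil 5\ln(1/\delta')\rceil$, repeat $k$ times: build $\mathcal{A}$ = (prepare via $\mathcal{O}_p$, apply log-ratio oracle, apply uniformly controlled $R_y(2\arcsin\sqrt{g_L})$ on an ancilla, uncompute log-ratio oracle) and run canonical amplitude estimation with $M$ Grover iterates $-\mathcal{A}S_0\mathcal{A}^\dagger S_\chi$ to get $\hat a^{(j)}=\sin^2(\pi m_j/M)$; output $2L\cdot\mathrm{median}_j\hat a^{(j)} - L$. Algorithm QCMIE: for each $z\in\mathcal{Z}_+$, run QKLA on $p_z,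 q_z$ with precision $\tau$, confidence $\delta/|\mathcal{Z}_+|$ and clip $L$, obtaining $\widehat D(z)$; output $\widehat{\mathrm{I}} = \sum_{z\in\mathcal{Z}_+} p(z)\widehat D(z)$. *)

theory Defs
  imports "HOL-Probability.Probability"
begin

definition clipL :: "real \<Rightarrow> real \<Rightarrow> real" where
  "clipL L u = max (-L) (min L u)"

text \<open>Clipped log-ratio; log2(p/0)=+inf (clipped to L), log2(0/q)=-inf (clipped to -L).\<close>
definition ellL :: "real \<Rightarrow> ('w \<Rightarrow> real) \<Rightarrow> ('w \<Rightarrow> real) \<Rightarrow> 'w \<Rightarrow> real" where
  "ellL L p q w = (if p w = 0 then -L else if q w = 0 then L
                   else clipL L (log 2 (p w / q w)))"

definition gL :: "real \<Rightarrow> ('w \<Rightarrow> real) \<Rightarrow> ('w \<Rightarrow> real) \<Rightarrow> 'w \<Rightarrow> real" where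
  "gL L p q w = (ellL L p q w + L) / (2 * L)"

definition KL :: "'w set \<Rightarrow> ('w \<Rightarrow> real) \<Rightarrow> ('w \<Rightarrow> real) \<Rightarrow> real" where
  "KL W p q = (\<Sum>w\<in>W. p w * log 2 (p w / q w))"

definition KLclip :: "'w set \<Rightarrow> real \<Rightarrow> ('w \<Rightarrow> real) \<Rightarrow> ('w \<Rightarrow> real) \<Rightarrow> real" where
  "KLclip W L p q = (\<Sum>w\<in>W. p w * ellL L p q w)"

text \<open>Joint distribution P of (X,Y,Z) on nat-coded finite alphabets.\<close>
definition pZ :: "(nat \<times> nat \<times> nat) pmf \<Rightarrow> nat \<Rightarrow> real" where
  "pZ P z = measure_pmf.prob P {t. snd (snd t) = z}"

definition pXgZ :: "(nat \<times> nat \<times> nat) pmf \<Rightarrow> nat \<Rightarrow> nat \<Rightarrow> real" where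
  "pXgZ P z x = measure_pmf.prob P {t. fst t = x \<and> snd (snd t) = z} / pZ P z"

definition pYgZ :: "(nat \<times> nat \<times> nat) pmf \<Rightarrow> nat \<Rightarrow> nat \<Rightarrow> real" where
  "pYgZ P z y = measure_pmf.prob P {t. fst (snd t) = y \<and> snd (snd t) = z} / pZ P z"

definition pcond :: "(nat \<times> nat \<times> nat) pmf \<Rightarrow> nat \<Rightarrow> nat \<times> nat \<Rightarrow> real" where
  "pcond P z w = pmf P (fst w, snd w, z) / pZ P z"

definition qcond :: "(nat \<times> nat \<times> nat) pmf \<Rightarrow> nat \<Rightarrow> nat \<times> nat \<Rightarrow> real" where
  "qcond P z w = pXgZ P z (fst w) * pYgZ P z (snd w)"

definition Zplus :: "nat set \<Rightarrow> (nat \<times> nat \<times> nat) pmf \<Rightarrow> nat set" where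
  "Zplus Z P = {z \<in> Z. pZ P z > 0}"

definition CMI :: "nat set \<Rightarrow> nat set \<Rightarrow> nat set \<Rightarrow> (nat \<times> nat \<times> nat) pmf \<Rightarrow> real" where
  "CMI X Y Z P = (\<Sum>z\<in>Zplus Z P. pZ P z * KL (X \<times> Y) (pcond P z) (qcond P z))"

definition etaL :: "nat set \<Rightarrow> nat set \<Rightarrow> real \<Rightarrow> (nat \<times> nat \<times> nat) pmf \<Rightarrow> nat \<Rightarrow> real" where
  "etaL X Y L P z = KL (X \<times> Y) (pcond P z) (qcond P z) - KLclip (X \<times> Y) L (pcond P z) (qcond P z)"

text \<open>Good-state amplitude of A|0>: a = sum_w p(w) g_L(w).\<close>
definition amp :: "'w set \<Rightarrow> real \<Rightarrow> ('w \<Rightarrow> real) \<Rightarrow> ('w \<Rightarrow> real) \<Rightarrow> real" where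
  "amp W L p q = (\<Sum>w\<in>W. p w * gL L p q w)"

text \<open>With theta = arcsin(sqrt a), Q^k A|0> = sin((2k+1)theta)|good> + cos((2k+1)theta)|bad>.
  Canonical AE prepares sum_k |k> Q^k A|0> / sqrt M, applies the inverse QFT on the
  first register and measures it; the probability of outcome y is given below.\<close>
definition ae_prob :: "nat \<Rightarrow> real \<Rightarrow> nat \<Rightarrow> real" where
  "ae_prob M a y =
     (let th = arcsin (sqrt a) in
       (cmod (\<Sum>k<M. cis (- 2 * pi * real k * real y / real M)
                      * complex_of_real (sin ((2 * real k + 1) * th) / real M)))\<^sup>2
     + (cmod (\<Sum>k<M. cis (- 2 * pi * real k * real y / real M)
                      * complex_of_real (cos ((2 * real k + 1) * th) / real M)))\<^sup>2)"

definition ae_pmf :: "nat \<Rightarrow> real \<Rightarrow> nat pmf" where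
  "ae_pmf M a = embed_pmf (\<lambda>y. if y < M then ae_prob M a y else 0)"

primrec iid_pmf :: "nat \<Rightarrow> 'a pmf \<Rightarrow> 'a list pmf" where
  "iid_pmf 0 D = return_pmf []"
| "iid_pmf (Suc n) D = bind_pmf D (\<lambda>x. map_pmf (\<lambda>xs. x # xs) (iid_pmf n D))"

definition median :: "real list \<Rightarrow> real" where
  "median xs = sort xs ! ((length xs - 1) div 2)"

definition qkla_M :: "real \<Rightarrow> real \<Rightarrow> nat" where
  "qkla_M L \<tau> = 2 ^ nat \<lceil>log 2 (real (nat \<lceil>4 * pi * L / \<tau>\<rceil>))\<rceil>"

definition qkla_k :: "real \<Rightarrow> nat" where
  "qkla_k \<delta>' = nat \<lceil>5 * ln (1 / \<delta>')\<rceil>"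

definition QKLA :: "'w set \<Rightarrow> ('w \<Rightarrow> real) \<Rightarrow> ('w \<Rightarrow> real) \<Rightarrow> real \<Rightarrow> real \<Rightarrow> real \<Rightarrow> real pmf" where
  "QKLA W p q \<tau> \<delta>' L =
     map_pmf (\<lambda>ms. 2 * L * median (map (\<lambda>m. (sin (pi * real m / real (qkla_M L \<tau>)))\<^sup>2) ms) - L)
       (iid_pmf (qkla_k \<delta>') (ae_pmf (qkla_M L \<tau>) (amp W L p q)))"

text \<open>Oracle queries of one QKLA call: each run of AE applies A once (1 preparation + 2
  log-ratio queries) and M Grover iterates, each using A and A-dagger (6 queries).\<close>
definition qkla_queries :: "real \<Rightarrow> real \<Rightarrow> real \<Rightarrow> nat" where
  "qkla_queries \<tau> \<delta>' L = qkla_k \<delta>' * (3 + 6 * qkla_M L \<tau>)"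

definition QCMIE :: "nat set \<Rightarrow> nat set \<Rightarrow> nat set \<Rightarrow> (nat \<times> nat \<times> nat) pmf
                     \<Rightarrow> real \<Rightarrow> real \<Rightarrow> real \<Rightarrow> real pmf" where
  "QCMIE X Y Z P \<tau> \<delta> L =
     map_pmf (\<lambda>D. \<Sum>z\<in>Zplus Z P. pZ P z * D z)
       (Pi_pmf (Zplus Z P) 0
          (\<lambda>z. QKLA (X \<times> Y) (pcond P z) (qcond P z) \<tau> (\<delta> / real (card (Zplus Z P))) L))"

definition qcmie_queries :: "nat set \<Rightarrow> (nat \<times> nat \<times> nat) pmf \<Rightarrow> real \<Rightarrow> real \<Rightarrow> real \<Rightarrow> nat" where
  "qcmie_queries Z P \<tau> \<delta> L =
     card (Zplus Z P) * qkla_queries \<tau> (\<delta> / real (card (Zplus Z P))) L"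

end

theory Submission
  imports Defs "HOL-Analysis.Harmonic_Numbers"
begin

(* For each stratum, the clipped divergence is the affine image 2 L a - L of the amplitude
   a = sum_w p(w) g_L(w) in [0, 1] that QKLA estimates.  Canonical amplitude estimation with
   M grid points returns y with probability (F(2 theta - 2 pi y / M) + F(-2 theta - 2 pi y / M)) / 2,
   where F is the normalised Fejer kernel and sin^2 theta = a.  The four grid points nearest to
   M theta / pi carry Fejer mass at least 4/5 (a sinc estimate) and each estimates a within 2 pi / M,
   hence the divergence within tau because M >= 4 pi L / tau.  The median of k >= 5 ln (1/delta')
   repetitions errs only if half of them err, which a Chernoff bound makes at most
   (4/5)^k <= delta'.  A union bound over the strata and the triangle inequality against the clipping
   errors eta_L give the accuracy; the cost is |Z_+| k (3 + 6 M) = O(|Z| (L/tau) log(|Z|/delta)). *)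

section \<open>A lower bound for sums of squared sinc values\<close>

lemma sin_ge_taylor7:
  fixes x :: real
  assumes "0 \<le> x"
  shows "x - x^3/6 + x^5/120 - x^7/5040 \<le> sin x"
proof -
  have "\<bar>sin x - (\<Sum>m<7. sin_coeff m * x ^ m)\<bar> \<le> inverse (fact 7) * \<bar>x\<bar> ^ 7"
    by (rule Maclaurin_sin_bound)
  moreover have "(\<Sum>m<7. sin_coeff m * x ^ m) = x - x^3/6 + x^5/120"
    by (simp add: sin_coeff_def lessThan_nat_numeral fact_numeral)
  moreover have "inverse (fact 7) * \<bar>x\<bar> ^ 7 = x^7/5040"
    using assms by (simp add: fact_numeral eval_nat_numeral field_simps)
  ultimately show ?thesis
    by linarith
qed

text \<open>Summing \<open>(sin (\<pi> g) / (\<pi> (g - j)))\<^sup>2\<close> over \<open>j \<in> {-1, 0, 1, 2}\<close> gives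
  \<open>(sin (\<pi> g) / (\<pi> g))\<^sup>2 * sinc_weight g\<close>.\<close>
definition sinc_weight :: "real \<Rightarrow> real" where
  "sinc_weight g = 1 + (g/(1-g))^2 + (g/(1+g))^2 + (g/(2-g))^2"

lemma sinc_weight_mono:
  assumes "0 \<le> a" "a \<le> g" "g \<le> 1/2"
  shows "sinc_weight a \<le> sinc_weight g"
proof -
  have "a/(1-a) \<le> g/(1-g)" "a/(1+a) \<le> g/(1+g)" "a/(2-a) \<le> g/(2-g)"
    using assms by (simp_all add: divide_simps) (simp_all add: algebra_simps)
  then have "(a/(1-a))^2 \<le> (g/(1-g))^2" "(a/(1+a))^2 \<le> (g/(1+g))^2" "(a/(2-a))^2 \<le> (g/(2-g))^2"
    using assms by (auto intro!: power_mono)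
  then show ?thesis
    unfolding sinc_weight_def by linarith
qed

text \<open>A lower bound for \<open>sin x / x\<close> on \<open>[\<pi> a, \<pi> b]\<close>: the degree-7 Taylor bound
  with \<open>3.1415 < \<pi> < 3.1416\<close>.\<close>
definition sinc_lower :: "real \<Rightarrow> real \<Rightarrow> real" where
  "sinc_lower a b = 1 - (3.1416*b)^2/6 + (3.1415*a)^4/120 - (3.1416*b)^6/5040"

lemma sinc_lower_le:
  fixes a b g :: real
  assumes "0 \<le> a" "a \<le> g" "g \<le> b" "0 < g"
  shows "sinc_lower a b \<le> sin (pi*g) / (pi*g)"
proof -
  define x where "x = pi*g"
  have "0 < x"
    using assms by (simp add: x_def)
  have x_le: "x \<le> 3.1416*b"
    unfolding x_def using pi_approx assms by (intro mult_mono) auto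
  have x_ge: "3.1415*a \<le> x"
    unfolding x_def using pi_approx assms by (intro mult_mono) auto
  have "x - x^3/6 + x^5/120 - x^7/5040 \<le> sin x"
    using \<open>0 < x\<close> by (intro sin_ge_taylor7) simp
  then have "(x - x^3/6 + x^5/120 - x^7/5040) / x \<le> sin x / x"
    using \<open>0 < x\<close> by (intro divide_right_mono) auto
  also have "(x - x^3/6 + x^5/120 - x^7/5040) / x = 1 - x^2/6 + x^4/120 - x^6/5040"
    using \<open>0 < x\<close> by (simp add: field_simps eval_nat_numeral)
  finally have taylor: "1 - x^2/6 + x^4/120 - x^6/5040 \<le> sin x / x" .
  have "x^2 \<le> (3.1416*b)^2" "x^6 \<le> (3.1416*b)^6" "(3.1415*a)^4 \<le> x^4"
    using x_le x_ge \<open>0 < x\<close> assms by (auto intro!: power_mono)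
  with taylor show ?thesis
    unfolding sinc_lower_def x_def by linarith
qed

text \<open>Checked on nine subintervals of \<open>]0, 1/2]\<close>, using \<open>sinc_lower\<close> for the first factor
  and monotonicity of \<open>sinc_weight\<close> for the second.\<close>
lemma sinc_sq_weight_ge:
  fixes g :: real
  assumes "0 < g" "g \<le> 1/2"
  shows "4/5 \<le> (sin (pi*g) / (pi*g))^2 * sinc_weight g"
proof -
  define pieces :: "(real \<times> real) list" where "pieces = [(0, 25/100), (25/100, 32/100),
    (32/100, 37/100), (37/100, 40/100), (40/100, 43/100), (43/100, 45/100), (45/100, 47/100),
    (47/100, 49/100), (49/100, 1/2)]"
  have "\<exists>(a, b) \<in> set pieces. a \<le> g \<and> g \<le> b"
    using assms unfolding pieces_def by simp linarith
  then obtain a b where ab: "(a, b) \<in> set pieces" "a \<le> g" "g \<le> b"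
    by blast
  have "list_all (\<lambda>(a, b). 0 \<le> a \<and> b \<le> 1/2 \<and> 0 \<le> sinc_lower a b
      \<and> 4/5 \<le> (sinc_lower a b)^2 * sinc_weight a) pieces"
    unfolding pieces_def by (simp add: sinc_lower_def sinc_weight_def power_divide)
  then have cert: "0 \<le> a" "b \<le> 1/2" "0 \<le> sinc_lower a b" "4/5 \<le> (sinc_lower a b)^2 * sinc_weight a"
    using ab(1) unfolding list_all_iff by auto
  have "(sinc_lower a b)^2 \<le> (sin (pi*g) / (pi*g))^2"
    using sinc_lower_le[of a g b] ab cert assms by (intro power_mono) auto
  moreover have "sinc_weight a \<le> sinc_weight g"
    using ab cert assms by (intro sinc_weight_mono) auto
  moreover have "0 \<le> sinc_weight a"
    unfolding sinc_weight_def by simp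
  ultimately have "(sinc_lower a b)^2 * sinc_weight a \<le> (sin (pi*g) / (pi*g))^2 * sinc_weight g"
    by (intro mult_mono) auto
  then show ?thesis
    using cert by linarith
qed

lemma sinc_sq_shifts_sum_ge:
  fixes g :: real
  assumes "0 < g" "g < 1"
  shows "4/5 \<le> (\<Sum>j\<in>{-1,0,1,2::int}. (sin (pi*g) / (pi * (g - of_int j)))^2)"
proof -
  define S where "S g = (\<Sum>j\<in>{-1,0,1,2::int}. (sin (pi*g) / (pi * (g - of_int j)))^2)" for g
  have S_expand: "S g = (sin (pi*g) / (pi*(1+g)))^2 + (sin (pi*g) / (pi*g))^2
      + (sin (pi*g) / (pi*(1-g)))^2 + (sin (pi*g) / (pi*(2-g)))^2" for g
    by (simp add: S_def power_divide power_mult_distrib power2_commute add.commute)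
  have half: "4/5 \<le> S g" if "0 < g" "g \<le> 1/2" for g
  proof -
    have "(sin (pi*g) / (pi*g))^2 * (g/y)^2 = (sin (pi*g) / (pi*y))^2" if "y \<noteq> 0" for y
      using that \<open>0 < g\<close> by (simp add: power_divide power_mult_distrib)
    then have "(sin (pi*g) / (pi*g))^2 * sinc_weight g = S g"
      using that unfolding S_expand sinc_weight_def by (simp add: distrib_left)
    then show ?thesis
      using sinc_sq_weight_ge[OF that] by simp
  qed
  have "S (1 - g) = S g"
    unfolding S_expand by (simp add: right_diff_distrib algebra_simps)
  then show ?thesis
    using half[of g] half[of "1 - g"] assms unfolding S_def[symmetric] by (cases "g \<le> 1/2") auto
qed

section \<open>The Fejer kernel\<close>

text \<open>\<open>1/M\<close> times the Fejer kernel of order \<open>M\<close>, normalised to take the value 1 at 0.\<close>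
definition fejer :: "nat \<Rightarrow> real \<Rightarrow> real" where
  "fejer M t = (cmod (\<Sum>k<M. cis (real k * t)))\<^sup>2 / (real M)\<^sup>2"

lemma fejer_nonneg: "0 \<le> fejer M t"
  by (simp add: fejer_def)

lemma fejer_0: "M > 0 \<Longrightarrow> fejer M 0 = 1"
  by (simp add: fejer_def)

lemma fejer_periodic: "fejer M (t + 2 * pi * of_int q) = fejer M t"
proof -
  have "cis (real k * (t + 2 * pi * of_int q)) = cis (real k * t)" for k
  proof -
    have "cis (real k * (t + 2 * pi * of_int q)) = cis (real k * t) * cis (2 * pi * of_int (int k * q))"
      by (simp add: algebra_simps cis_mult[symmetric])
    also have "cis (2 * pi * of_int (int k * q)) = 1"
      by (rule cis_multiple_2pi) simp
    finally show ?thesis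
      by simp
  qed
  then show ?thesis
    by (simp add: fejer_def)
qed

lemma norm_cis_minus_1: "cmod (cis t - 1) = 2 * \<bar>sin (t/2)\<bar>"
  using dist_exp_i_1[of t] by (simp add: cis_conv_exp)

text \<open>Summing the geometric series gives
  \<open>fejer M (2 \<pi> \<delta> / M) = (sin (\<pi> \<delta>) / (M sin (\<pi> \<delta> / M)))\<^sup>2\<close>, and \<open>\<bar>sin y\<bar> \<le> \<bar>y\<bar>\<close> in the denominator.\<close>
lemma fejer_ge_sinc_sq:
  assumes "M > 0" "\<delta> \<noteq> 0"
  shows "(sin (pi*\<delta>) / (pi*\<delta>))^2 \<le> fejer M (2*pi*\<delta>/M)"
proof -
  define t where "t = 2*pi*\<delta>/M"
  have geom: "(\<Sum>k<M. cis (real k * t)) = (\<Sum>k<M. (cis t)^k)"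
    by (intro sum.cong) (simp_all add: Complex.DeMoivre)
  have "\<bar>sin (pi*\<delta>) / (pi*\<delta>)\<bar> \<le> 1"
    using abs_sin_x_le_abs_x[of "pi*\<delta>"] assms by (simp add: divide_le_eq_1)
  then have sinc_le_1: "(sin (pi*\<delta>) / (pi*\<delta>))^2 \<le> 1"
    by (metis abs_square_le_1)
  show ?thesis
  proof (cases "cis t = 1")
    case True
    then have "fejer M t = 1"
      using assms unfolding fejer_def geom by simp
    then show ?thesis
      using sinc_le_1 by (simp add: t_def)
  next
    case False
    then have "(\<Sum>k<M. cis (real k * t)) = ((cis t)^M - 1) / (cis t - 1)"
      unfolding geom by (rule geometric_sum)
    also have "(cis t)^M = cis (real M * t)"
      by (simp add: Complex.DeMoivre)
    finally have "cmod (\<Sum>k<M. cis (real k * t)) = cmod (cis (real M * t) - 1) / cmod (cis t - 1)"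
      by (simp add: norm_divide)
    also have "\<dots> = \<bar>sin (pi*\<delta>)\<bar> / \<bar>sin (pi*\<delta>/M)\<bar>"
      using assms by (simp add: norm_cis_minus_1 t_def)
    finally have eq: "fejer M t = (sin (pi*\<delta>))^2 / ((real M)^2 * (sin (pi*\<delta>/M))^2)"
      unfolding fejer_def by (simp add: power_divide)
    have "sin (pi*\<delta>/M) \<noteq> 0"
      using False norm_cis_minus_1[of t] by (auto simp: t_def)
    then have "0 < (real M)^2 * (sin (pi*\<delta>/M))^2"
      using assms by simp
    moreover have "(sin (pi*\<delta>/M))^2 \<le> (pi*\<delta>/M)^2"
      using abs_sin_x_le_abs_x[of "pi*\<delta>/M"] by (simp only: abs_le_square_iff)
    then have "(real M)^2 * (sin (pi*\<delta>/M))^2 \<le> (pi*\<delta>)^2"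
      using assms by (simp add: power_divide field_simps)
    ultimately show ?thesis
      using eq assms by (simp add: t_def power_divide divide_left_mono)
  qed
qed

lemma sin_sq_minus_int_pi: "(sin (x - of_int j * pi))^2 = (sin x)^2"
proof -
  have "sin (of_int j * pi) = 0"
    by (auto simp: sin_zero_iff_int2)
  moreover have "(cos (of_int j * pi))^2 = 1 - (sin (of_int j * pi))^2"
    by (simp add: cos_squared_eq)
  ultimately show ?thesis
    by (simp add: sin_diff power_mult_distrib)
qed

lemma fejer_ge_sinc_sq_shift:
  fixes g :: real and j :: int
  assumes "M > 0" "g \<noteq> of_int j"
  shows "(sin (pi*g) / (pi * (g - of_int j)))^2 \<le> fejer M (2*pi*(g - of_int j)/M)"
proof -
  have "(sin (pi*(g - of_int j)))^2 = (sin (pi*g))^2"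
    using sin_sq_minus_int_pi[of "pi*g" j] by (simp add: right_diff_distrib mult.commute)
  then show ?thesis
    using fejer_ge_sinc_sq[of M "g - of_int j"] assms by (simp add: power_divide)
qed

lemma fejer_shifts_sum_ge:
  fixes g :: real
  assumes "M > 0" "0 \<le> g" "g < 1"
  shows "4/5 \<le> (\<Sum>j\<in>{-1,0,1,2::int}. fejer M (2*pi*(g - of_int j)/M))"
proof (cases "g = 0")
  case True
  have "fejer M (2*pi*(g - of_int 0)/M) \<le> (\<Sum>j\<in>{-1,0,1,2::int}. fejer M (2*pi*(g - of_int j)/M))"
    by (rule member_le_sum) (auto simp: fejer_nonneg)
  then show ?thesis
    using True fejer_0[OF \<open>M > 0\<close>] by simp
next
  case False
  have "(\<Sum>j\<in>{-1,0,1,2::int}. (sin (pi*g) / (pi * (g - of_int j)))^2)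
      \<le> (\<Sum>j\<in>{-1,0,1,2::int}. fejer M (2*pi*(g - of_int j)/M))"
    using assms False by (intro sum_mono fejer_ge_sinc_sq_shift) auto
  then show ?thesis
    using sinc_sq_shifts_sum_ge[of g] assms False by simp
qed

lemma sum_cis_grid:
  fixes d :: int
  assumes "M > 0" "\<bar>d\<bar> < int M"
  shows "(\<Sum>y<M. cis (2 * pi * of_int d * real y / M)) = (if d = 0 then of_nat M else 0)"
proof (cases "d = 0")
  case False
  define \<omega> where "\<omega> = cis (2 * pi * of_int d / M)"
  have "\<omega> \<noteq> 1"
  proof
    assume "\<omega> = 1"
    then obtain k :: int where "2 * pi * of_int d / M = of_int k * 2 * pi"
      by (auto simp: \<omega>_def complex_eq_iff cos_one_2pi_int)
    with assms have "d = int M * k"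
      by (simp add: field_simps) (metis of_int_eq_iff of_int_mult of_int_of_nat_eq)
    with False assms show False
      by (auto simp: abs_mult)
  qed
  have "(\<Sum>y<M. cis (2 * pi * of_int d * real y / M)) = (\<Sum>y<M. \<omega> ^ y)"
    by (intro sum.cong refl) (auto simp: \<omega>_def Complex.DeMoivre mult_ac)
  also have "\<dots> = (\<omega> ^ M - 1) / (\<omega> - 1)"
    using \<open>\<omega> \<noteq> 1\<close> by (rule geometric_sum)
  also have "\<omega> ^ M = 1"
    using assms by (simp add: \<omega>_def Complex.DeMoivre cis_multiple_2pi)
  finally show ?thesis
    using False by simp
qed simp

text \<open>Parseval's identity for the discrete Fourier transform on the grid \<open>2 \<pi> y / M\<close>.\<close>
lemma fejer_grid_sum:
  assumes "M > 0"
  shows "(\<Sum>y<M. fejer M (c - 2*pi*real y/M)) = 1"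
proof -
  have square: "complex_of_real ((cmod (\<Sum>k<M. cis (real k * (c - 2*pi*real y/M))))^2)
     = (\<Sum>k<M. \<Sum>l<M. cis ((real k - real l) * c) * cis (2 * pi * of_int (int l - int k) * real y / M))" for y
  proof -
    have "complex_of_real ((cmod (\<Sum>k<M. cis (real k * (c - 2*pi*real y/M))))^2)
        = (\<Sum>k<M. \<Sum>l<M. cis (real k * (c - 2*pi*real y/M)) * cis (- (real l * (c - 2*pi*real y/M))))"
      unfolding complex_norm_square by (simp add: sum_distrib_left sum_distrib_right cis_cnj) (rule sum.swap)
    also have "\<dots> = (\<Sum>k<M. \<Sum>l<M. cis ((real k - real l) * c) * cis (2 * pi * of_int (int l - int k) * real y / M))"
      by (intro sum.cong refl, unfold cis_mult) (rule arg_cong[where f=cis], simp add: field_simps)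
    finally show ?thesis .
  qed
  have "complex_of_real (\<Sum>y<M. (cmod (\<Sum>k<M. cis (real k * (c - 2*pi*real y/M))))^2)
      = (\<Sum>k<M. \<Sum>l<M. cis ((real k - real l) * c) * (\<Sum>y<M. cis (2 * pi * of_int (int l - int k) * real y / M)))"
    unfolding of_real_sum square sum_distrib_left
    by (rule trans[OF sum.swap], rule sum.cong[OF refl], rule sum.swap)
  also have "\<dots> = (\<Sum>k<M. \<Sum>l<M. cis ((real k - real l) * c) * (if int l - int k = 0 then of_nat M else 0))"
    by (intro sum.cong refl, subst sum_cis_grid) (use assms in auto)
  also have "\<dots> = (\<Sum>k<M. of_nat M)"
    by (intro sum.cong refl) (simp add: if_distrib cong: if_cong)
  also have "\<dots> = complex_of_real ((real M)^2)"
    by (simp add: power2_eq_square)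
  finally have "(\<Sum>y<M. (cmod (\<Sum>k<M. cis (real k * (c - 2*pi*real y/M))))^2) = (real M)^2"
    using of_real_eq_iff by blast
  then show ?thesis
    using assms unfolding fejer_def sum_divide_distrib[symmetric] by simp
qed

section \<open>The outcome distribution of amplitude estimation\<close>

lemma norm_sum_sin_cos:
  fixes w :: "'k \<Rightarrow> complex" and x :: "'k \<Rightarrow> real"
  shows "(cmod (\<Sum>k\<in>K. w k * of_real (sin (x k))))\<^sup>2 + (cmod (\<Sum>k\<in>K. w k * of_real (cos (x k))))\<^sup>2
       = ((cmod (\<Sum>k\<in>K. w k * cis (x k)))\<^sup>2 + (cmod (\<Sum>k\<in>K. w k * cis (- x k)))\<^sup>2) / 2"
proof -
  define U where "U = (\<Sum>k\<in>K. w k * cis (x k))"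
  define V where "V = (\<Sum>k\<in>K. w k * cis (- x k))"
  have sin_cis: "of_real (sin t) = (cis t - cis (-t)) / (2 * \<i>)"
    and cos_cis: "of_real (cos t) = (cis t + cis (-t)) / 2" for t
    by (simp_all add: complex_eq_iff cis.code)
  have sin_sum: "(\<Sum>k\<in>K. w k * of_real (sin (x k))) = (U - V) / (2 * \<i>)"
    unfolding sin_cis U_def V_def times_divide_eq_right right_diff_distrib
      sum_divide_distrib[symmetric] sum_subtractf[symmetric] ..
  have cos_sum: "(\<Sum>k\<in>K. w k * of_real (cos (x k))) = (U + V) / 2"
    unfolding cos_cis U_def V_def times_divide_eq_right distrib_left
      sum_divide_distrib[symmetric] sum.distrib[symmetric] ..
  have parallelogram: "(cmod (U - V))\<^sup>2 + (cmod (U + V))\<^sup>2 = 2 * (cmod U)\<^sup>2 + 2 * (cmod V)\<^sup>2"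
    unfolding cmod_power2 by (simp add: power2_eq_square algebra_simps)
  have "(cmod ((U - V) / (2 * \<i>)))\<^sup>2 + (cmod ((U + V) / 2))\<^sup>2
      = ((cmod (U - V))\<^sup>2 + (cmod (U + V))\<^sup>2) / 4"
    by (simp add: norm_divide norm_mult power_divide)
  also have "\<dots> = ((cmod U)\<^sup>2 + (cmod V)\<^sup>2) / 2"
    unfolding parallelogram by simp
  finally show ?thesis
    unfolding sin_sum cos_sum U_def V_def .
qed

lemma norm_sum_cis_eq_fejer:
  assumes "cmod c = 1"
  shows "(cmod (\<Sum>k<M. c * cis (real k * t) / of_nat M))\<^sup>2 = fejer M t"
  using assms by (simp add: fejer_def norm_divide norm_mult power_divide
      flip: sum_distrib_left sum_divide_distrib)

lemma ae_prob_eq_fejer: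
  "ae_prob M a y = (fejer M (2 * arcsin (sqrt a) - 2*pi*real y/M)
                    + fejer M (- 2 * arcsin (sqrt a) - 2*pi*real y/M)) / 2"
proof -
  define th where "th = arcsin (sqrt a)"
  define w where "w k = cis (- 2 * pi * real k * real y / real M) / of_nat M" for k :: nat
  define x where "x k = (2 * real k + 1) * th" for k :: nat
  have "cis (- 2 * pi * real k * real y / real M) * cis (x k)
      = cis th * cis (real k * (2 * th - 2*pi*real y/M))"
    and "cis (- 2 * pi * real k * real y / real M) * cis (- x k)
      = cis (- th) * cis (real k * (- 2 * th - 2*pi*real y/M))" for k
    unfolding x_def cis_mult by (rule arg_cong[where f=cis], simp add: field_simps)+
  then have phase: "w k * cis (x k) = cis th * cis (real k * (2 * th - 2*pi*real y/M)) / of_nat M"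
    "w k * cis (- x k) = cis (- th) * cis (real k * (- 2 * th - 2*pi*real y/M)) / of_nat M" for k
    unfolding w_def times_divide_eq_left by simp_all
  have "ae_prob M a y = (cmod (\<Sum>k<M. w k * of_real (sin (x k))))\<^sup>2
                        + (cmod (\<Sum>k<M. w k * of_real (cos (x k))))\<^sup>2"
    unfolding ae_prob_def Let_def th_def[symmetric] w_def x_def by simp
  also have "\<dots> = ((cmod (\<Sum>k<M. w k * cis (x k)))\<^sup>2 + (cmod (\<Sum>k<M. w k * cis (- x k)))\<^sup>2) / 2"
    by (rule norm_sum_sin_cos)
  also have "\<dots> = (fejer M (2 * th - 2*pi*real y/M) + fejer M (- 2 * th - 2*pi*real y/M)) / 2"
    unfolding phase by (simp add: norm_sum_cis_eq_fejer)
  finally show ?thesis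
    unfolding th_def .
qed

lemma ae_prob_nonneg: "0 \<le> ae_prob M a y"
  by (simp add: ae_prob_eq_fejer fejer_nonneg)

lemma sum_ae_prob:
  assumes "M > 0"
  shows "(\<Sum>y<M. ae_prob M a y) = 1"
  using fejer_grid_sum[OF assms, of "2 * arcsin (sqrt a)"] fejer_grid_sum[OF assms, of "- 2 * arcsin (sqrt a)"]
  by (simp add: ae_prob_eq_fejer sum.distrib flip: sum_divide_distrib)

lemma pmf_ae_pmf:
  assumes "M > 0"
  shows "pmf (ae_pmf M a) y = (if y < M then ae_prob M a y else 0)"
  unfolding ae_pmf_def
proof (rule pmf_embed_pmf)
  show "0 \<le> (if y < M then ae_prob M a y else 0)" for y
    by (simp add: ae_prob_nonneg)
  have "(\<integral>\<^sup>+y. ennreal (if y < M then ae_prob M a y else 0) \<partial>count_space UNIV)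
      = (\<Sum>y<M. ennreal (if y < M then ae_prob M a y else 0))"
    by (rule nn_integral_count_space') auto
  also have "\<dots> = 1"
    using sum_ae_prob[OF assms] by (subst sum_ennreal) (auto simp: ae_prob_nonneg)
  finally show "(\<integral>\<^sup>+y. ennreal (if y < M then ae_prob M a y else 0) \<partial>count_space UNIV) = 1" .
qed

lemma sin_sq_dist_le:
  fixes u v :: real
  shows "\<bar>(sin u)\<^sup>2 - (sin v)\<^sup>2\<bar> \<le> \<bar>u - v\<bar>"
proof -
  have "sin (u - v) * sin (u + v) = (sin u * cos v)\<^sup>2 - (cos u * sin v)\<^sup>2"
    by (simp add: sin_diff sin_add power2_eq_square algebra_simps)
  also have "\<dots> = (sin u)\<^sup>2 - (sin v)\<^sup>2"
    by (simp add: power_mult_distrib cos_squared_eq algebra_simps)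
  finally have "\<bar>(sin u)\<^sup>2 - (sin v)\<^sup>2\<bar> = \<bar>sin (u - v)\<bar> * \<bar>sin (u + v)\<bar>"
    by (metis abs_mult)
  also have "\<dots> \<le> \<bar>sin (u - v)\<bar>"
    by (simp add: mult_left_le)
  also have "\<dots> \<le> \<bar>u - v\<bar>"
    by (rule abs_sin_x_le_abs_x)
  finally show ?thesis .
qed

lemma real_nat_mod:
  assumes "M > 0"
  shows "real (nat (n mod int M)) = of_int n - real M * of_int (n div int M)"
proof -
  have "n mod int M = n - int M * (n div int M)"
    by (simp add: minus_div_mult_eq_mod[symmetric])
  moreover have "0 \<le> n mod int M"
    using assms by simp
  ultimately show ?thesis
    by simp
qed

text \<open>With \<open>\<omega> = M \<theta> / \<pi> = n + g\<close>, the outcomes \<open>(n + j) mod M\<close>,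
  \<open>j \<in> {-1, 0, 1, 2}\<close>, lie within \<open>2\<close> of \<open>\<omega>\<close> modulo \<open>M\<close>; they are distinct because \<open>M \<ge> 4\<close>.\<close>
lemma fejer_mass_of_close_outcomes:
  assumes "M \<ge> 4"
  shows "4/5 \<le> (\<Sum>y\<in>{y. y < M \<and> \<bar>(sin (pi * y / M))\<^sup>2 - (sin \<theta>)\<^sup>2\<bar> \<le> 2*pi/M}.
                   fejer M (2*\<theta> - 2*pi*real y/M))"
proof -
  have "M > 0"
    using assms by simp
  define G where "G = {y. y < M \<and> \<bar>(sin (pi * y / M))\<^sup>2 - (sin \<theta>)\<^sup>2\<bar> \<le> 2*pi/M}"
  define J where "J = {-1, 0, 1, 2::int}"
  define n where "n = \<lfloor>M * \<theta> / pi\<rfloor>"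
  define g where "g = M * \<theta> / pi - n"
  define r where "r j = nat ((n + j) mod int M)" for j
  have "0 \<le> g" "g < 1"
    unfolding g_def n_def by linarith+
  have r_eq: "real (r j) = of_int (n + j) - real M * of_int ((n + j) div int M)" for j
    unfolding r_def using real_nat_mod[OF \<open>M > 0\<close>] .
  have fejer_r: "fejer M (2*\<theta> - 2*pi*real (r j)/M) = fejer M (2*pi*(g - of_int j)/M)" for j
  proof -
    have "2*\<theta> - 2*pi*real (r j)/M = 2*pi*(g - of_int j)/M + 2 * pi * of_int ((n + j) div int M)"
      unfolding r_eq g_def using \<open>M > 0\<close> by (simp add: field_simps)
    then show ?thesis
      by (simp add: fejer_periodic)
  qed
  have r_close: "r j \<in> G" if "j \<in> J" for j
  proof -
    have "pi * real (r j) / M = pi * of_int (n + j) / M - of_int ((n + j) div int M) * pi"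
      unfolding r_eq using \<open>M > 0\<close> by (simp add: field_simps)
    then have "(sin (pi * real (r j) / M))\<^sup>2 = (sin (pi * of_int (n + j) / M))\<^sup>2"
      by (simp add: sin_sq_minus_int_pi)
    also have "\<bar>\<dots> - (sin \<theta>)\<^sup>2\<bar> \<le> \<bar>pi * of_int (n + j) / M - \<theta>\<bar>"
      by (rule sin_sq_dist_le)
    also have "pi * of_int (n + j) / M - \<theta> = pi / M * (of_int j - g)"
      unfolding g_def using \<open>M > 0\<close> by (simp add: field_simps)
    also have "\<bar>of_int j - g\<bar> \<le> 2"
      using that \<open>0 \<le> g\<close> \<open>g < 1\<close> unfolding J_def by auto
    then have "pi / M * \<bar>of_int j - g\<bar> \<le> pi / M * 2"
      by (intro mult_left_mono) auto
    then have "\<bar>pi / M * (of_int j - g)\<bar> \<le> pi / M * 2"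
      by (simp add: abs_mult)
    finally show ?thesis
      unfolding G_def r_def using \<open>M > 0\<close> by (simp add: nat_less_iff mult.commute)
  qed
  have "inj_on r J"
  proof (rule inj_onI)
    fix i j assume "i \<in> J" "j \<in> J" "r i = r j"
    then have "(n + i) mod int M = (n + j) mod int M"
      unfolding r_def using \<open>M > 0\<close> by (metis eq_nat_nat_iff pos_mod_sign of_nat_0_less_iff)
    then have "int M dvd i - j"
      by (simp add: mod_eq_dvd_iff)
    moreover have "\<bar>i - j\<bar> < int M"
      using \<open>i \<in> J\<close> \<open>j \<in> J\<close> assms unfolding J_def by auto
    ultimately show "i = j"
      using dvd_imp_le_int[of "i - j" "int M"] by fastforce
  qed
  have "(\<Sum>j\<in>J. fejer M (2*pi*(g - of_int j)/M)) = (\<Sum>y\<in>r ` J. fejer M (2*\<theta> - 2*pi*real y/M))"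
    using \<open>inj_on r J\<close> by (simp add: sum.reindex fejer_r)
  also have "\<dots> \<le> (\<Sum>y\<in>G. fejer M (2*\<theta> - 2*pi*real y/M))"
    using r_close by (intro sum_mono2) (auto simp: G_def fejer_nonneg)
  finally show ?thesis
    using fejer_shifts_sum_ge[OF \<open>M > 0\<close> \<open>0 \<le> g\<close> \<open>g < 1\<close>] unfolding G_def J_def by linarith
qed

lemma ae_pmf_accuracy:
  assumes "M > 0" "0 \<le> a" "a \<le> 1"
  shows "4/5 \<le> measure_pmf.prob (ae_pmf M a) {m. \<bar>(sin (pi * m / M))\<^sup>2 - a\<bar> \<le> 2*pi/M}"
    (is "_ \<le> measure_pmf.prob _ ?S")
proof (cases "M \<ge> 4")
  case True
  define \<theta> where "\<theta> = arcsin (sqrt a)"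
  have "sin \<theta> = sqrt a"
    unfolding \<theta>_def using assms by (intro sin_arcsin) (auto intro: order_trans[OF _ real_sqrt_ge_zero])
  then have sin_\<theta>: "(sin \<theta>)\<^sup>2 = a" "(sin (- \<theta>))\<^sup>2 = a"
    using assms by simp_all
  define G where "G = {y. y < M \<and> \<bar>(sin (pi * y / M))\<^sup>2 - a\<bar> \<le> 2*pi/M}"
  have "4/5 \<le> ((\<Sum>y\<in>G. fejer M (2*\<theta> - 2*pi*real y/M)) + (\<Sum>y\<in>G. fejer M (2*(-\<theta>) - 2*pi*real y/M))) / 2"
    using fejer_mass_of_close_outcomes[OF True, of \<theta>] fejer_mass_of_close_outcomes[OF True, of "- \<theta>"]
    unfolding G_def sin_\<theta> by simp
  also have "\<dots> = (\<Sum>y\<in>G. ae_prob M a y)"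
    by (simp add: ae_prob_eq_fejer \<theta>_def sum.distrib flip: sum_divide_distrib)
  also have "\<dots> = measure_pmf.prob (ae_pmf M a) G"
    by (subst measure_measure_pmf_finite) (auto simp: G_def pmf_ae_pmf[OF \<open>M > 0\<close>])
  also have "\<dots> \<le> measure_pmf.prob (ae_pmf M a) ?S"
    by (rule measure_pmf.finite_measure_mono) (auto simp: G_def)
  finally show ?thesis .
next
  case False
  then have "1 \<le> 2*pi/M"
    using pi_gt3 \<open>M > 0\<close> by (simp add: field_simps)
  moreover have "\<bar>(sin (pi * m / M))\<^sup>2 - a\<bar> \<le> 1" for m :: nat
  proof -
    have "0 \<le> (sin (pi * m / M))\<^sup>2" "(sin (pi * m / M))\<^sup>2 \<le> 1"
      by (simp_all add: abs_square_le_1)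
    then show ?thesis
      unfolding abs_le_iff using assms by linarith
  qed
  ultimately have "?S = UNIV"
    by (auto intro: order_trans)
  then show ?thesis
    by simp
qed

section \<open>The median trick\<close>

lemma measure_pmf_prob_not:
  "measure_pmf.prob D {x. \<not> P x} = 1 - measure_pmf.prob D {x. P x}"
  using measure_pmf.prob_compl[of "{x. P x}" D] by (simp add: Collect_neg_eq Compl_eq_Diff_UNIV)

lemma iid_pmf_length: "xs \<in> set_pmf (iid_pmf n D) \<Longrightarrow> length xs = n"
  by (induction n arbitrary: xs) auto

lemma nn_integral_iid_pmf_prod_list:
  "(\<integral>\<^sup>+xs. prod_list (map f xs) \<partial>iid_pmf n D) = (\<integral>\<^sup>+x. f x \<partial>D) ^ n"
proof (induction n)
  case (Suc n)
  have "(\<integral>\<^sup>+xs. prod_list (map f xs) \<partial>iid_pmf (Suc n) D)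
      = (\<integral>\<^sup>+x. f x * (\<integral>\<^sup>+xs. prod_list (map f xs) \<partial>iid_pmf n D) \<partial>D)"
    by (simp add: nn_integral_cmult)
  also have "\<dots> = (\<integral>\<^sup>+x. f x \<partial>D) * (\<integral>\<^sup>+xs. prod_list (map f xs) \<partial>iid_pmf n D)"
    by (simp add: nn_integral_multc)
  finally show ?case
    using Suc by (simp add: mult.commute)
qed simp

text \<open>A Chernoff bound via the moment generating function \<open>\<integral> 4 ^ [B x] \<le> 8/5\<close>.\<close>
lemma iid_pmf_half_bad_le:
  assumes "measure_pmf.prob D {x. B x} \<le> 1/5"
  shows "measure_pmf.prob (iid_pmf n D) {xs. n \<le> 2 * length (filter B xs)} \<le> (4/5)^n"
proof -
  define S where "S = {xs. n \<le> 2 * length (filter B xs)}"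
  define f where "f x = ennreal (if B x then 4 else 1)" for x
  have prod_f: "prod_list (map f xs) = ennreal (4 ^ length (filter B xs))" for xs
    by (induction xs) (auto simp: f_def ennreal_mult')
  have "(\<integral>\<^sup>+x. f x \<partial>D) = (\<integral>\<^sup>+x. 1 + 3 * indicator {x. B x} x \<partial>D)"
    by (intro nn_integral_cong) (auto simp: f_def indicator_def)
  also have "\<dots> = (\<integral>\<^sup>+x. 1 \<partial>D) + (\<integral>\<^sup>+x. 3 * indicator {x. B x} x \<partial>D)"
    by (subst nn_integral_add) auto
  also have "\<dots> = 1 + 3 * emeasure D {x. B x}"
    by (subst nn_integral_cmult_indicator) (auto simp: measure_pmf.emeasure_space_1)
  also have "\<dots> = ennreal (1 + 3 * measure_pmf.prob D {x. B x})"
    by (simp add: measure_pmf.emeasure_eq_measure ennreal_plus ennreal_mult)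
  also have "\<dots> \<le> ennreal (8/5)"
    using assms by (intro ennreal_leI) simp
  finally have mgf: "(\<integral>\<^sup>+x. f x \<partial>D) \<le> ennreal (8/5)" .
  have "ennreal (2^n) * indicator S xs \<le> prod_list (map f xs)" for xs
  proof (cases "xs \<in> S")
    case True
    then have "(2::real)^n \<le> 2^(2 * length (filter B xs))"
      by (intro power_increasing) (auto simp: S_def)
    then show ?thesis
      using True by (simp add: prod_f power_mult ennreal_leI)
  qed simp
  then have "ennreal (2^n) * emeasure (iid_pmf n D) S \<le> (\<integral>\<^sup>+xs. prod_list (map f xs) \<partial>iid_pmf n D)"
    by (subst nn_integral_cmult_indicator[symmetric]) (auto intro: nn_integral_mono)
  also have "\<dots> \<le> ennreal (8/5) ^ n"
    unfolding nn_integral_iid_pmf_prod_list by (intro power_mono mgf) simp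
  finally have "2^n * measure_pmf.prob (iid_pmf n D) S \<le> (8/5)^n"
    by (simp add: measure_pmf.emeasure_eq_measure ennreal_power flip: ennreal_mult)
  then have "measure_pmf.prob (iid_pmf n D) S \<le> (8/5)^n / 2^n"
    by (simp add: field_simps)
  also have "(8/5)^n / 2^n = (4/5::real)^n"
    by (simp add: power_divide[symmetric])
  finally show ?thesis
    unfolding S_def .
qed

lemma median_between:
  fixes xs :: "real list"
  assumes "xs \<noteq> []" "2 * length (filter (\<lambda>x. \<not> (lo \<le> x \<and> x \<le> hi)) xs) < length xs"
  shows "lo \<le> median xs \<and> median xs \<le> hi"
proof -
  define P where "P = (\<lambda>x. \<not> (lo \<le> x \<and> x \<le> hi))"
  define ys where "ys = sort xs"
  define k where "k = length xs"
  define i where "i = (k - 1) div 2"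
  have "sorted ys" "length ys = k" "i < k"
    using assms by (simp_all add: ys_def k_def i_def)
  have "k \<le> 2 * (i + 1)" "k \<le> 2 * (k - i)"
    unfolding i_def by presburger+
  have minority: "2 * length (filter P xs) < k"
    using assms(2) by (simp add: P_def k_def)
  have "length (filter P ys) = length (filter P xs)"
    unfolding ys_def by (metis mset_filter mset_sort size_mset)
  then have few: "card A \<le> length (filter P xs)" if "A \<subseteq> {j. j < k \<and> P (ys ! j)}" for A
    using that card_mono[OF _ that] \<open>length ys = k\<close> by (simp add: length_filter_conv_card)
  have "lo \<le> ys ! i"
  proof (rule ccontr)
    assume "\<not> lo \<le> ys ! i"
    then have "{..i} \<subseteq> {j. j < k \<and> P (ys ! j)}"
      using \<open>sorted ys\<close> \<open>length ys = k\<close> \<open>i < k\<close> unfolding P_def by (auto dest: sorted_nth_mono[of ys _ i])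
    then have "card {..i} \<le> length (filter P xs)"
      by (rule few)
    then show False
      using minority \<open>k \<le> 2 * (i + 1)\<close> \<open>k \<le> 2 * (k - i)\<close> by simp
  qed
  moreover have "ys ! i \<le> hi"
  proof (rule ccontr)
    assume "\<not> ys ! i \<le> hi"
    then have "{i..<k} \<subseteq> {j. j < k \<and> P (ys ! j)}"
      using \<open>sorted ys\<close> \<open>length ys = k\<close> unfolding P_def by (auto dest: sorted_nth_mono[of ys i])
    then have "card {i..<k} \<le> length (filter P xs)"
      by (rule few)
    then show False
      using minority \<open>k \<le> 2 * (i + 1)\<close> \<open>k \<le> 2 * (k - i)\<close> by simp
  qed
  ultimately show ?thesis
    by (simp add: median_def ys_def i_def k_def)
qed

text \<open>The median of \<open>k\<close> samples leaves \<open>[lo, hi]\<close> only if half of them do.\<close>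
lemma median_iid_pmf_between:
  assumes "0 < k" "measure_pmf.prob D {m. \<not> (lo \<le> f m \<and> f m \<le> hi)} \<le> 1/5"
  shows "1 - (4/5)^k \<le> measure_pmf.prob (iid_pmf k D)
                         {ms. lo \<le> median (map f ms) \<and> median (map f ms) \<le> hi}"
    (is "_ \<le> measure_pmf.prob _ ?good")
proof -
  define B where "B = (\<lambda>m. \<not> (lo \<le> f m \<and> f m \<le> hi))"
  define Bad where "Bad = {ms. k \<le> 2 * length (filter B ms)}"
  have "ms \<in> ?good" if "ms \<in> set_pmf (iid_pmf k D)" "ms \<notin> Bad" for ms
  proof -
    have "length (map f ms) = k"
      using iid_pmf_length[OF that(1)] by simp
    moreover have "length (filter (\<lambda>x. \<not> (lo \<le> x \<and> x \<le> hi)) (map f ms)) = length (filter B ms)"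
      by (simp add: B_def filter_map o_def)
    ultimately have "map f ms \<noteq> []" "2 * length (filter (\<lambda>x. \<not> (lo \<le> x \<and> x \<le> hi)) (map f ms)) < length (map f ms)"
      using that(2) \<open>0 < k\<close> unfolding Bad_def by auto
    then show ?thesis
      by (simp add: median_between)
  qed
  then have "measure_pmf.prob (iid_pmf k D) (- Bad) \<le> measure_pmf.prob (iid_pmf k D) ?good"
    by (subst measure_Int_set_pmf[symmetric]) (auto intro!: measure_pmf.finite_measure_mono)
  moreover have "measure_pmf.prob (iid_pmf k D) Bad \<le> (4/5)^k"
    unfolding Bad_def using iid_pmf_half_bad_le[of D B k] assms(2) by (simp add: B_def)
  ultimately show ?thesis
    using measure_pmf.prob_compl[of Bad "iid_pmf k D"] by (simp add: Compl_eq_Diff_UNIV)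
qed

section \<open>Accuracy of QKLA\<close>

lemma ellL_bounds: "0 \<le> L \<Longrightarrow> -L \<le> ellL L p q w \<and> ellL L p q w \<le> L"
  by (auto simp: ellL_def clipL_def)

lemma gL_bounds: "0 < L \<Longrightarrow> 0 \<le> gL L p q w \<and> gL L p q w \<le> 1"
  using ellL_bounds[of L p q w] by (auto simp: gL_def field_simps)

lemma amp_bounds:
  assumes "\<forall>w\<in>W. 0 \<le> p w" "sum p W = 1" "0 < L"
  shows "0 \<le> amp W L p q \<and> amp W L p q \<le> 1"
proof
  show "0 \<le> amp W L p q"
    unfolding amp_def using assms by (intro sum_nonneg mult_nonneg_nonneg) (simp_all add: gL_bounds)
  have "amp W L p q \<le> (\<Sum>w\<in>W. p w * 1)"
    unfolding amp_def using assms by (intro sum_mono mult_left_mono) (simp_all add: gL_bounds)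
  then show "amp W L p q \<le> 1"
    using assms by simp
qed

lemma KLclip_eq_amp:
  assumes "sum p W = 1" "0 < L"
  shows "KLclip W L p q = 2 * L * amp W L p q - L"
proof -
  have "2 * L * amp W L p q = (\<Sum>w\<in>W. p w * ellL L p q w + L * p w)"
    unfolding amp_def gL_def sum_distrib_left using assms by (intro sum.cong) (auto simp: field_simps)
  also have "\<dots> = KLclip W L p q + L"
    using assms by (simp add: sum.distrib KLclip_def flip: sum_distrib_left)
  finally show ?thesis
    by simp
qed

lemma qkla_M_pos: "0 < qkla_M L \<tau>"
  by (simp add: qkla_M_def)

lemma qkla_M_ge:
  assumes "0 < L" "0 < \<tau>"
  shows "4 * pi * L / \<tau> \<le> qkla_M L \<tau>"
proof -
  define N where "N = real (nat \<lceil>4 * pi * L / \<tau>\<rceil>)"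
  have "4 * pi * L / \<tau> \<le> N" "1 \<le> N"
    using assms unfolding N_def by (linarith, simp add: le_ceiling_iff)
  have "N = 2 powr (log 2 N)"
    using \<open>1 \<le> N\<close> by simp
  also have "\<dots> \<le> 2 powr (real (nat \<lceil>log 2 N\<rceil>))"
    by (intro powr_mono) linarith+
  also have "\<dots> = qkla_M L \<tau>"
    unfolding qkla_M_def N_def by (simp add: powr_realpow)
  finally show ?thesis
    using \<open>4 * pi * L / \<tau> \<le> N\<close> by simp
qed

lemma qkla_k_pos: "0 < d \<Longrightarrow> d < 1 \<Longrightarrow> 0 < qkla_k d"
  by (simp add: qkla_k_def)

text \<open>The constant 5 in \<open>qkla_k\<close> works because \<open>5 ln (5/4) \<ge> 1\<close>,
  i.e. \<open>(5/4)^5 \<ge> e\<close>.\<close>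
lemma qkla_k_power_le:
  assumes "0 < d" "d < 1"
  shows "(4/5::real) ^ qkla_k d \<le> d"
proof -
  have "exp 1 \<le> (5/4::real)^5"
    using e_less_272 by (simp add: power_divide)
  then have "1 \<le> 5 * ln (5/4::real)"
    by (metis exp_le_cancel_iff exp_ln ln_realpow of_nat_numeral zero_less_divide_iff
        zero_less_numeral zero_less_power)
  have "5 * ln (1/d) \<le> qkla_k d"
    unfolding qkla_k_def by linarith
  have "ln ((4/5::real) ^ qkla_k d) = - (qkla_k d * ln (5/4))"
    by (simp add: ln_realpow ln_div algebra_simps)
  also have "\<dots> \<le> - (5 * ln (1/d) * ln (5/4))"
    using \<open>5 * ln (1/d) \<le> qkla_k d\<close> by (intro le_imp_neg_le mult_right_mono) auto
  also have "\<dots> \<le> - ln (1/d)"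
    using \<open>1 \<le> 5 * ln (5/4)\<close> assms by (simp add: mult_le_cancel_left1)
  also have "\<dots> = ln d"
    using assms by (simp add: ln_div)
  finally show ?thesis
    using assms by simp
qed

lemma QKLA_accuracy:
  assumes "\<forall>w\<in>W. 0 \<le> p w" "sum p W = 1" "0 < L" "0 < \<tau>" "0 < d" "d < 1"
  shows "1 - d \<le> measure_pmf.prob (QKLA W p q \<tau> d L) {v. \<bar>v - KLclip W L p q\<bar> \<le> \<tau>}"
proof -
  define a where "a = amp W L p q"
  define M where "M = qkla_M L \<tau>"
  define k where "k = qkla_k d"
  define f where "f m = (sin (pi * real m / real M))\<^sup>2" for m :: nat
  define good where "good = {ms. a - 2*pi/M \<le> median (map f ms) \<and> median (map f ms) \<le> a + 2*pi/M}"
  have "0 \<le> a" "a \<le> 1"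
    using amp_bounds[OF assms(1-3)] by (simp_all add: a_def)
  have "4/5 \<le> measure_pmf.prob (ae_pmf M a) {m. \<bar>f m - a\<bar> \<le> 2*pi/M}"
    unfolding f_def M_def using ae_pmf_accuracy[OF qkla_M_pos \<open>0 \<le> a\<close> \<open>a \<le> 1\<close>] .
  then have "measure_pmf.prob (ae_pmf M a) {m. \<not> (a - 2*pi/M \<le> f m \<and> f m \<le> a + 2*pi/M)} \<le> 1/5"
    unfolding measure_pmf_prob_not by (simp add: abs_diff_le_iff)
  then have "1 - (4/5)^k \<le> measure_pmf.prob (iid_pmf k (ae_pmf M a)) good"
    unfolding good_def k_def using qkla_k_pos[OF assms(5,6)] by (intro median_iid_pmf_between)
  moreover have "1 - d \<le> 1 - (4/5)^k"
    unfolding k_def using qkla_k_power_le[OF assms(5,6)] by simp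
  moreover have "\<bar>(2 * L * median (map f ms) - L) - KLclip W L p q\<bar> \<le> \<tau>" if "ms \<in> good" for ms
  proof -
    have "\<bar>(2 * L * median (map f ms) - L) - KLclip W L p q\<bar> = 2 * L * \<bar>median (map f ms) - a\<bar>"
      using assms by (simp add: KLclip_eq_amp a_def abs_mult flip: right_diff_distrib)
    also have "\<dots> \<le> 2 * L * (2*pi/M)"
      using that \<open>0 < L\<close> unfolding good_def by (intro mult_left_mono) auto
    also have "\<dots> \<le> \<tau>"
      using qkla_M_ge[OF \<open>0 < L\<close> \<open>0 < \<tau>\<close>] qkla_M_pos[of L \<tau>] assms
      by (simp add: M_def field_simps)
    finally show ?thesis .
  qed
  then have "measure_pmf.prob (iid_pmf k (ae_pmf M a)) good
      \<le> measure_pmf.prob (QKLA W p q \<tau> d L) {v. \<bar>v - KLclip W L p q\<bar> \<le> \<tau>}"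
    unfolding QKLA_def M_def[symmetric] k_def[symmetric] a_def[symmetric] f_def[symmetric]
    by (auto intro!: measure_pmf.finite_measure_mono)
  ultimately show ?thesis
    by linarith
qed

section \<open>Accuracy and cost of QCMIE\<close>

lemma sum_pZ:
  assumes "finite Z" "set_pmf P \<subseteq> X \<times> Y \<times> Z"
  shows "(\<Sum>z\<in>Z. pZ P z) = 1"
proof -
  have "(\<Sum>z\<in>Z. pZ P z) = measure_pmf.prob P (\<Union>z\<in>Z. {t. snd (snd t) = z})"
    unfolding pZ_def using assms(1)
    by (intro measure_pmf.finite_measure_finite_Union[symmetric]) (auto simp: disjoint_family_on_def)
  also have "\<dots> = 1"
    using assms(2) by (subst measure_pmf.prob_eq_1) (auto intro!: AE_pmfI)
  finally show ?thesis .
qed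

lemma sum_pZ_Zplus:
  assumes "finite Z" "set_pmf P \<subseteq> X \<times> Y \<times> Z"
  shows "(\<Sum>z\<in>Zplus Z P. pZ P z) = 1"
proof -
  have "(\<Sum>z\<in>Zplus Z P. pZ P z) = (\<Sum>z\<in>Z. pZ P z)"
    using assms(1) unfolding Zplus_def
    by (intro sum.mono_neutral_left) (auto simp: pZ_def less_le)
  then show ?thesis
    using sum_pZ[OF assms] by simp
qed

lemma Zplus_nonempty:
  assumes "finite Z" "set_pmf P \<subseteq> X \<times> Y \<times> Z"
  shows "Zplus Z P \<noteq> {}"
  using sum_pZ_Zplus[OF assms] by auto

lemma sum_pmf_stratum:
  assumes "finite X" "finite Y" "set_pmf P \<subseteq> X \<times> Y \<times> Z"
  shows "(\<Sum>w\<in>X \<times> Y. pmf P (fst w, snd w, z)) = pZ P z"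
proof -
  define emb where "emb w = (fst w, snd w, z)" for w :: "nat \<times> nat"
  have "pZ P z = measure_pmf.prob P ({t. snd (snd t) = z} \<inter> set_pmf P)"
    unfolding pZ_def by (rule measure_Int_set_pmf[symmetric])
  also have "{t. snd (snd t) = z} \<inter> set_pmf P = emb ` (X \<times> Y) \<inter> set_pmf P"
    using assms(3) by (force simp: emb_def)
  also have "measure_pmf.prob P \<dots> = (\<Sum>t\<in>emb ` (X \<times> Y). pmf P t)"
    using assms(1,2) by (simp add: measure_Int_set_pmf measure_measure_pmf_finite)
  also have "\<dots> = (\<Sum>w\<in>X \<times> Y. pmf P (fst w, snd w, z))"
    by (subst sum.reindex) (auto simp: inj_on_def emb_def)
  finally show ?thesis ..
qed

lemma pcond_nonneg: "0 \<le> pcond P z w"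
  by (simp add: pcond_def pZ_def)

lemma sum_pcond:
  assumes "finite X" "finite Y" "set_pmf P \<subseteq> X \<times> Y \<times> Z" "z \<in> Zplus Z P"
  shows "sum (pcond P z) (X \<times> Y) = 1"
  using sum_pmf_stratum[OF assms(1-3), of z] assms(4)
  by (simp add: pcond_def Zplus_def flip: sum_divide_distrib)

lemma prob_Pi_pmf_all_ge:
  assumes "finite I"
  shows "1 - (\<Sum>i\<in>I. 1 - measure_pmf.prob (Q i) (A i))
           \<le> measure_pmf.prob (Pi_pmf I dflt Q) {f. \<forall>i\<in>I. f i \<in> A i}"
proof -
  let ?P = "Pi_pmf I dflt Q"
  have "measure_pmf.prob ?P {f. \<not> (\<forall>i\<in>I. f i \<in> A i)} = measure_pmf.prob ?P (\<Union>i\<in>I. {f. f i \<notin> A i})"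
    by (rule arg_cong[where f = "measure_pmf.prob ?P"]) auto
  also have "\<dots> \<le> (\<Sum>i\<in>I. measure_pmf.prob ?P {f. f i \<notin> A i})"
    using assms by (intro measure_pmf.finite_measure_subadditive_finite) auto
  also have "\<dots> = (\<Sum>i\<in>I. 1 - measure_pmf.prob (Q i) (A i))"
  proof (rule sum.cong[OF refl])
    fix i assume "i \<in> I"
    have "measure_pmf.prob ?P {f. f i \<notin> A i} = measure_pmf.prob (map_pmf (\<lambda>f. f i) ?P) {x. x \<notin> A i}"
      by simp
    also have "map_pmf (\<lambda>f. f i) ?P = Q i"
      using assms \<open>i \<in> I\<close> by (simp add: Pi_pmf_component)
    finally show "measure_pmf.prob ?P {f. f i \<notin> A i} = 1 - measure_pmf.prob (Q i) (A i)"
      by (simp add: measure_pmf_prob_not)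
  qed
  finally show ?thesis
    unfolding measure_pmf_prob_not by simp
qed

lemma CMI_estimate_error:
  assumes "finite Z" "set_pmf P \<subseteq> X \<times> Y \<times> Z"
    and "\<forall>z\<in>Zplus Z P. \<bar>D z - KLclip (X \<times> Y) L (pcond P z) (qcond P z)\<bar> \<le> \<tau>"
  shows "\<bar>(\<Sum>z\<in>Zplus Z P. pZ P z * D z) - CMI X Y Z P\<bar>
           \<le> \<tau> + Max ((\<lambda>z. \<bar>etaL X Y L P z\<bar>) ` Zplus Z P)"
proof -
  define Zp where "Zp = Zplus Z P"
  define \<eta> where "\<eta> = Max ((\<lambda>z. \<bar>etaL X Y L P z\<bar>) ` Zp)"
  have "finite Zp"
    using assms(1) by (simp add: Zp_def Zplus_def)
  have "\<bar>D z - KL (X \<times> Y) (pcond P z) (qcond P z)\<bar> \<le> \<tau> + \<eta>" if "z \<in> Zp" for z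
  proof -
    have "\<bar>etaL X Y L P z\<bar> \<le> \<eta>"
      unfolding \<eta>_def using \<open>finite Zp\<close> that by (intro Max_ge) auto
    then show ?thesis
      using assms(3) that unfolding Zp_def etaL_def by force
  qed
  then have "\<bar>(\<Sum>z\<in>Zp. pZ P z * D z) - CMI X Y Z P\<bar> \<le> (\<Sum>z\<in>Zp. pZ P z * (\<tau> + \<eta>))"
    unfolding CMI_def Zp_def[symmetric] sum_subtractf[symmetric] right_diff_distrib[symmetric]
    by (intro order_trans[OF sum_abs] sum_mono) (auto simp: abs_mult pZ_def intro: mult_left_mono)
  also have "\<dots> = \<tau> + \<eta>"
    using sum_pZ_Zplus[OF assms(1,2)] by (simp add: Zp_def flip: sum_distrib_right)
  finally show ?thesis
    unfolding Zp_def \<eta>_def .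
qed

lemma QCMIE_accuracy:
  assumes "finite X" "finite Y" "finite Z" "set_pmf P \<subseteq> X \<times> Y \<times> Z"
    and "0 < L" "0 < \<tau>" "0 < \<delta>" "\<delta> < 1"
  shows "1 - \<delta> \<le> measure_pmf.prob (QCMIE X Y Z P \<tau> \<delta> L)
          {I. \<bar>I - CMI X Y Z P\<bar> \<le> \<tau> + Max ((\<lambda>z. \<bar>etaL X Y L P z\<bar>) ` Zplus Z P)}"
proof -
  define Zp where "Zp = Zplus Z P"
  define d where "d = \<delta> / real (card Zp)"
  define Q where "Q z = QKLA (X \<times> Y) (pcond P z) (qcond P z) \<tau> d L" for z
  define A where "A z = {v. \<bar>v - KLclip (X \<times> Y) L (pcond P z) (qcond P z)\<bar> \<le> \<tau>}" for z
  have "finite Zp" "Zp \<noteq> {}"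
    using Zplus_nonempty[OF assms(3,4)] assms(3) by (simp_all add: Zp_def Zplus_def)
  then have "1 \<le> real (card Zp)"
    by (simp add: Suc_le_eq card_gt_0_iff)
  then have "0 < d" "d < 1"
    using assms(7,8) by (simp_all add: d_def field_simps)
  have "1 - d \<le> measure_pmf.prob (Q z) (A z)" if "z \<in> Zp" for z
    unfolding Q_def A_def using that assms \<open>0 < d\<close> \<open>d < 1\<close>
    by (intro QKLA_accuracy) (auto simp: pcond_nonneg sum_pcond Zp_def)
  then have "(\<Sum>z\<in>Zp. 1 - measure_pmf.prob (Q z) (A z)) \<le> (\<Sum>z\<in>Zp. d)"
    by (intro sum_mono) (simp add: algebra_simps)
  also have "\<dots> = \<delta>"
    using \<open>1 \<le> real (card Zp)\<close> by (simp add: d_def)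
  finally have "1 - \<delta> \<le> 1 - (\<Sum>z\<in>Zp. 1 - measure_pmf.prob (Q z) (A z))"
    by simp
  also have "\<dots> \<le> measure_pmf.prob (Pi_pmf Zp 0 Q) {D. \<forall>z\<in>Zp. D z \<in> A z}"
    using \<open>finite Zp\<close> by (rule prob_Pi_pmf_all_ge)
  also have "\<dots> \<le> measure_pmf.prob (QCMIE X Y Z P \<tau> \<delta> L)
          {I. \<bar>I - CMI X Y Z P\<bar> \<le> \<tau> + Max ((\<lambda>z. \<bar>etaL X Y L P z\<bar>) ` Zplus Z P)}"
    unfolding QCMIE_def Zp_def[symmetric] d_def[symmetric] Q_def[symmetric]
    using CMI_estimate_error[OF assms(3,4)]
    by (auto simp: A_def Zp_def intro!: measure_pmf.finite_measure_mono)
  finally show ?thesis .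
qed

lemma qkla_M_le:
  assumes "0 < L" "0 < \<tau>"
  shows "qkla_M L \<tau> \<le> 8 * pi * L / \<tau> + 2"
proof -
  define N where "N = real (nat \<lceil>4 * pi * L / \<tau>\<rceil>)"
  have "N \<le> 4 * pi * L / \<tau> + 1" "1 \<le> N"
    using assms unfolding N_def by (simp_all add: of_nat_nat le_ceiling_iff)
  have "qkla_M L \<tau> = 2 powr (real (nat \<lceil>log 2 N\<rceil>))"
    unfolding qkla_M_def N_def by (simp add: powr_realpow)
  also have "\<dots> \<le> 2 powr (log 2 N + 1)"
    using \<open>1 \<le> N\<close> by (intro powr_mono) (simp_all add: of_nat_nat)
  also have "\<dots> = 2 * N"
    using \<open>1 \<le> N\<close> by (simp add: powr_add)
  finally show ?thesis
    using \<open>N \<le> 4 * pi * L / \<tau> + 1\<close> by simp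
qed

lemma qkla_queries_le:
  assumes "0 < \<tau>" "\<tau> \<le> L" "0 < d" "d < 1"
  shows "qkla_queries \<tau> d L \<le> 171 * (L / \<tau>) * (5 * ln (1 / d) + 1)"
proof -
  define r where "r = L / \<tau>"
  have "1 \<le> r"
    using assms by (simp add: r_def)
  have "qkla_M L \<tau> \<le> 8 * (pi * r) + 2"
    using qkla_M_le[of L \<tau>] assms by (simp add: r_def)
  moreover have "pi * r \<le> 13/4 * r"
    using pi_approx \<open>1 \<le> r\<close> by (intro mult_right_mono) auto
  ultimately have "3 + 6 * real (qkla_M L \<tau>) \<le> 171 * r"
    using \<open>1 \<le> r\<close> by linarith
  moreover have "qkla_k d \<le> 5 * ln (1 / d) + 1" "0 \<le> 5 * ln (1 / d) + 1"
    unfolding qkla_k_def using assms by (simp_all add: of_nat_nat)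
  ultimately have "qkla_k d * (3 + 6 * real (qkla_M L \<tau>)) \<le> (5 * ln (1 / d) + 1) * (171 * r)"
    by (intro mult_mono) auto
  then show ?thesis
    by (simp add: qkla_queries_def r_def mult_ac)
qed

lemma qcmie_queries_le:
  assumes "finite Z" "0 < \<tau>" "\<tau> \<le> L" "0 < \<delta>" "\<delta> \<le> 1/2"
  shows "qcmie_queries Z P \<tau> \<delta> L \<le> 1200 * card Z * (L / \<tau>) * ln (card Z / \<delta>)"
proof -
  define n where "n = card (Zplus Z P)"
  define r where "r = L / \<tau>"
  define l where "l = ln (card Z / \<delta>)"
  have "n \<le> card Z"
    unfolding n_def Zplus_def using assms(1) by (intro card_mono) auto
  have "1 \<le> r"
    using assms by (simp add: r_def)
  show ?thesis
  proof (cases "n = 0")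
    case True
    have "0 \<le> l" if "card Z \<noteq> 0"
      using that assms(4,5) by (simp add: l_def field_simps)
    then have "0 \<le> real (card Z) * l"
      by (cases "card Z = 0") auto
    then have "0 \<le> 1200 * real (card Z) * r * l"
      using mult_nonneg_nonneg[of "1200 * r" "real (card Z) * l"] \<open>1 \<le> r\<close> by (simp add: mult_ac)
    then show ?thesis
      using True by (simp add: qcmie_queries_def n_def[symmetric] r_def[symmetric] l_def[symmetric])
  next
    case False
    have "ln 2 \<le> l"
      using False \<open>n \<le> card Z\<close> assms(4,5) by (simp add: l_def field_simps)
    then have "1 \<le> 3/2 * l"
      using ln2_ge_two_thirds by linarith
    have "ln (n / \<delta>) \<le> l"
      using False \<open>n \<le> card Z\<close> assms(4) by (simp add: l_def divide_right_mono)
    have "0 < \<delta> / n" "\<delta> / n < 1"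
      using False assms(4,5) by (simp_all add: field_simps)
    then have "qkla_queries \<tau> (\<delta> / n) L \<le> 171 * r * (5 * ln (n / \<delta>) + 1)"
      using qkla_queries_le[of \<tau> L "\<delta> / n"] assms by (simp add: r_def)
    also have "\<dots> \<le> 171 * r * (13/2 * l)"
      using \<open>ln (n / \<delta>) \<le> l\<close> \<open>1 \<le> 3/2 * l\<close> \<open>1 \<le> r\<close> by (intro mult_left_mono) auto
    finally have "real n * qkla_queries \<tau> (\<delta> / n) L \<le> card Z * (171 * r * (13/2 * l))"
      using \<open>n \<le> card Z\<close> \<open>1 \<le> 3/2 * l\<close> \<open>1 \<le> r\<close> by (intro mult_mono) auto
    also have "\<dots> = 2223/2 * (card Z * r * l)"
      by (simp add: algebra_simps)
    also have "\<dots> \<le> 1200 * card Z * r * l"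
      using \<open>1 \<le> 3/2 * l\<close> \<open>1 \<le> r\<close> by simp
    finally show ?thesis
      by (simp add: qcmie_queries_def n_def[symmetric] r_def[symmetric] l_def[symmetric])
  qed
qed

theorem theorem3:
  "\<exists>C>0. \<forall>(X::nat set) (Y::nat set) (Z::nat set) (P::(nat \<times> nat \<times> nat) pmf)
           (L::real) (\<tau>::real) (\<delta>::real).
      finite X \<and> finite Y \<and> finite Z \<and> set_pmf P \<subseteq> X \<times> Y \<times> Z \<and>
      L > 0 \<and> \<tau> > 0 \<and> 0 < \<delta> \<and> \<delta> < 1 \<longrightarrow>
        measure_pmf.prob (QCMIE X Y Z P \<tau> \<delta> L)
          {I. \<bar>I - CMI X Y Z P\<bar> \<le> \<tau> + Max ((\<lambda>z. \<bar>etaL X Y L P z\<bar>) ` Zplus Z P)}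
          \<ge> 1 - \<delta>
      \<and> (\<tau> \<le> L \<and> \<delta> \<le> 1/2 \<longrightarrow>
          real (qcmie_queries Z P \<tau> \<delta> L)
            \<le> C * real (card Z) * (L / \<tau>) * ln (real (card Z) / \<delta>))"
  using QCMIE_accuracy qcmie_queries_le by (intro exI[of _ 1200]) auto

end
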